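(* Let $A_1,A_2,A_3,A_4\in\mathbb{R}^3$ be four non-coplanar points such that for every $i\in\{1,2,3,4\}$, $\big\|\sum_{j\neq i}\vec u(A_j,A_i)\big\|>1$, and let $A_0$ be the Fermat–Torricelli point of $A_1A_2A_3A_4$ (so $A_0$ is not a vertex and $\sum_{i=1}^4\vec u(A_0,A_i)=\vec 0$). For $i\neq j$ let $\vec\delta_{i0j}=\vec u(A_0,A_i)+\vec u(A_0,A_j)$, a direction vector of the bisector of the angle $\angle A_iA_0A_j$. Then: (1) the bisectors of each pair of angles subtended at $A_0$ by opposite edges lie on a common line through $A_0$, namely $$\frac{\vec\delta_{102}}{\|\vec\delta_{102}\|}\cdot\frac{\vec\delta_{304}}{\|\vec\delta_{304}\|}=\frac{\vec\delta_{203}}{\|\vec\delta_{203}\|}\cdot\frac{\vec\delta_{104}}{\|\vec\delta_{104}\|}=\frac{\vec\delta_{103}}{\|\vec\delta_{103}\|}\cdot\frac{\vec\delta_{204}}{\|\vec\delta_{204}\|}=-1;$$ (2) these three lines (with directions $\vec\delta_{102},\vec\delta_{103},\vec\delta_{104}$) are pairwise perpendicular at $A_0$: $$\vec\delta_{102}\cdot\vec\delta_{103}=\vec\delta_{102}\cdot\vec\delta_{104}=\vec\delta_{103}\cdot\vec\delta_{104}=0.$$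
   Context: For distinct points $P,Q\in\mathbb{R}^3$, $\vec u(P,Q)=\frac{Q-P}{\|Q-P\|}$ denotes the unit vector from $P$ to $Q$. The Fermat–Torricelli point of the tetrahedron is the minimizer over $A_0\in\mathbb{R}^3$ of $\sum_{i=1}^4\|A_0-A_i\|$; under the stated condition it is not a vertex and satisfies $\sum_{i=1}^4\vec u(A_0,A_i)=\vec 0$. The opposite edge pairs of the tetrahedron are $\{A_1A_2,A_3A_4\}$, $\{A_2A_3,A_1A_4\}$, $\{A_1A_3,A_2A_4\}$, and the corresponding angles at $A_0$ are $\angle A_iA_0A_j$. *)

theory Defs
  imports "HOL-Analysis.Analysis"
begin

text \<open>Unit vector from P to Q (meaningful for P \<noteq> Q).\<close>
definition uvec :: "real^3 \<Rightarrow> real^3 \<Rightarrow> real^3" where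
  "uvec P Q = (Q - P) /\<^sub>R norm (Q - P)"

definition is_FT_point :: "(nat \<Rightarrow> real^3) \<Rightarrow> real^3 \<Rightarrow> bool" where
  "is_FT_point A A0 \<longleftrightarrow>
     (\<forall>X. (\<Sum>i\<in>{1..4}. norm (A0 - A i)) \<le> (\<Sum>i\<in>{1..4}. norm (X - A i)))"

end

theory Submission
  imports Defs
begin

text \<open>Write \<open>u\<^sub>i\<close> for the unit vector from \<open>A\<^sub>0\<close> to \<open>A\<^sub>i\<close>. Away from the vertices the sum of
  distances is differentiable with gradient \<open>-\<Sum>u\<^sub>i\<close>, so at the minimiser \<open>\<Sum>u\<^sub>i = 0\<close>; the minimiser is
  not a vertex \<open>A\<^sub>k\<close>, because leaving \<open>A\<^sub>k\<close> against \<open>W = \<Sum>j\<noteq>k. u(A\<^sub>j, A\<^sub>k)\<close> costs \<open>\<parallel>W\<parallel>\<close> per unit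
  step and saves \<open>\<parallel>W\<parallel>\<^sup>2\<close>. From \<open>\<Sum>u\<^sub>i = 0\<close> opposite bisector vectors are negatives of each other, and
  squaring \<open>u\<^sub>4 = -(u\<^sub>1 + u\<^sub>2 + u\<^sub>3)\<close> makes the pairwise products of the \<open>u\<^sub>1 + u\<^sub>j\<close> vanish. The
  bisector vectors are nonzero since \<open>u\<^sub>i + u\<^sub>j = 0 = u\<^sub>k + u\<^sub>l\<close> would put all four vertices in the
  plane through \<open>A\<^sub>0\<close> spanned by \<open>u\<^sub>i, u\<^sub>k\<close>.\<close>

lemma uvec_decomp: "Q = P + norm (Q - P) *\<^sub>R uvec P Q"
  by (cases "Q = P") (simp_all add: uvec_def)

lemma norm_uvec: "P \<noteq> Q \<Longrightarrow> norm (uvec P Q) = 1"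
  by (simp add: uvec_def)

lemma uvec_commute: "uvec P Q = - uvec Q P"
  by (metis uvec_def minus_diff_eq norm_minus_commute scaleR_minus_right)

lemma inner_uvec_left: "uvec P Q \<bullet> v = - ((P - Q) \<bullet> v) / norm (P - Q)"
  by (simp add: uvec_def norm_minus_commute inner_diff_left divide_inverse ac_simps)

text \<open>Second-order upper bound on the norm along a line, from
  \<open>2 \<parallel>a\<parallel> \<parallel>a + t v\<parallel> \<le> \<parallel>a\<parallel>\<^sup>2 + \<parallel>a + t v\<parallel>\<^sup>2\<close>.\<close>
lemma norm_add_scaleR_le:
  fixes a v :: "'a::real_inner"
  assumes "a \<noteq> 0"
  shows "norm (a + t *\<^sub>R v) \<le> norm a + t * (a \<bullet> v) / norm a + t\<^sup>2 * (norm v)\<^sup>2 / (2 * norm a)"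
proof -
  define n where "n = norm a"
  have n: "n > 0" using assms by (simp add: n_def)
  have "(norm (a + t *\<^sub>R v))\<^sup>2 = (a + t *\<^sub>R v) \<bullet> (a + t *\<^sub>R v)"
    by (simp add: power2_norm_eq_inner)
  also have "\<dots> = a \<bullet> a + 2 * t * (a \<bullet> v) + t\<^sup>2 * (v \<bullet> v)"
    by (simp add: inner_add_left inner_add_right inner_commute algebra_simps power2_eq_square)
  finally have sq: "(norm (a + t *\<^sub>R v))\<^sup>2 = n\<^sup>2 + 2 * t * (a \<bullet> v) + t\<^sup>2 * (norm v)\<^sup>2"
    by (simp add: n_def power2_norm_eq_inner)
  have "2 * n * norm (a + t *\<^sub>R v) \<le> n\<^sup>2 + (norm (a + t *\<^sub>R v))\<^sup>2"
    using sum_squares_bound[of n "norm (a + t *\<^sub>R v)"] by (simp add: power2_eq_square algebra_simps)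
  then have "norm (a + t *\<^sub>R v) \<le> (n\<^sup>2 + (norm (a + t *\<^sub>R v))\<^sup>2) / (2 * n)"
    using n by (simp add: field_simps)
  also have "\<dots> = n + t * (a \<bullet> v) / n + t\<^sup>2 * (norm v)\<^sup>2 / (2 * n)"
    using n unfolding sq by (simp add: field_simps power2_eq_square)
  finally show ?thesis by (simp add: n_def)
qed

lemma dist_move_le:
  assumes "P \<noteq> Q"
  shows "norm (P + t *\<^sub>R v - Q)
    \<le> norm (P - Q) - t * (uvec P Q \<bullet> v) + t\<^sup>2 * (norm v)\<^sup>2 / (2 * norm (P - Q))"
proof -
  have "P + t *\<^sub>R v - Q = (P - Q) + t *\<^sub>R v" by (simp add: algebra_simps)
  then show ?thesis
    using norm_add_scaleR_le[of "P - Q" t v] assms by (simp only:) (simp add: inner_uvec_left)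
qed

lemma exists_pos_quadratic_neg:
  fixes c D :: real
  assumes "c > 0" "D \<ge> 0"
  shows "\<exists>t>0. t\<^sup>2 * D < t * c"
proof (intro exI[of _ "c / (D + 1)"] conjI)
  show "c / (D + 1) > 0" using assms by simp
  have "c / (D + 1) * D < c" using assms by (simp add: field_simps)
  then have "c / (D + 1) * (c / (D + 1) * D) < c / (D + 1) * c"
    using assms by (intro mult_strict_left_mono) auto
  then show "(c / (D + 1))\<^sup>2 * D < c / (D + 1) * c"
    by (simp add: power2_eq_square algebra_simps)
qed

text \<open>At \<open>p \<notin> a ` I\<close> the sum of distances has derivative \<open>-(\<Sum>i. uvec p (a i)) \<bullet> w\<close> along \<open>w\<close>.\<close>
lemma sum_dist_decrease:
  fixes a :: "'i \<Rightarrow> real^3"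
  assumes "finite I" "\<forall>i\<in>I. p \<noteq> a i" "c < (\<Sum>i\<in>I. uvec p (a i)) \<bullet> w"
  shows "\<exists>t>0. (\<Sum>i\<in>I. norm (p + t *\<^sub>R w - a i)) < (\<Sum>i\<in>I. norm (p - a i)) - t * c"
proof -
  define g where "g = (\<Sum>i\<in>I. uvec p (a i)) \<bullet> w"
  define D where "D = (\<Sum>i\<in>I. (norm w)\<^sup>2 / (2 * norm (p - a i)))"
  have "D \<ge> 0" unfolding D_def by (intro sum_nonneg) simp
  moreover have "g - c > 0" using assms(3) by (simp add: g_def)
  ultimately obtain t where t: "t > 0" "t\<^sup>2 * D < t * (g - c)"
    using exists_pos_quadratic_neg by blast
  have "(\<Sum>i\<in>I. norm (p + t *\<^sub>R w - a i))
      \<le> (\<Sum>i\<in>I. norm (p - a i) - t * (uvec p (a i) \<bullet> w) + t\<^sup>2 * ((norm w)\<^sup>2 / (2 * norm (p - a i))))"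
    using assms(2) by (intro sum_mono) (simp add: dist_move_le)
  also have "\<dots> = (\<Sum>i\<in>I. norm (p - a i)) - t * g + t\<^sup>2 * D"
    by (simp add: g_def D_def sum.distrib sum_subtractf sum_distrib_left inner_sum_left)
  also have "\<dots> < (\<Sum>i\<in>I. norm (p - a i)) - t * c"
    using t by (simp add: right_diff_distrib)
  finally show ?thesis using t(1) by blast
qed

lemma sum_dist_min_imp_sum_uvec_eq_0:
  fixes a :: "'i \<Rightarrow> real^3"
  assumes "finite I" "\<forall>i\<in>I. p \<noteq> a i"
    and min: "\<forall>X. (\<Sum>i\<in>I. norm (p - a i)) \<le> (\<Sum>i\<in>I. norm (X - a i))"
  shows "(\<Sum>i\<in>I. uvec p (a i)) = 0"
proof (rule ccontr)
  define w where "w = (\<Sum>i\<in>I. uvec p (a i))"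
  assume "w \<noteq> 0"
  then have "0 < w \<bullet> w" by simp
  then obtain t where "(\<Sum>i\<in>I. norm (p + t *\<^sub>R w - a i)) < (\<Sum>i\<in>I. norm (p - a i))"
    using sum_dist_decrease[OF assms(1,2), of 0 w] by (auto simp: w_def)
  with min show False by (meson not_less)
qed

lemma sum_dist_not_min_at_vertex:
  fixes a :: "'i \<Rightarrow> real^3"
  assumes "finite I" "k \<in> I" "\<forall>i\<in>I - {k}. a k \<noteq> a i"
    and gt: "norm (\<Sum>j\<in>I - {k}. uvec (a j) (a k)) > 1"
  shows "\<exists>X. (\<Sum>i\<in>I. norm (X - a i)) < (\<Sum>i\<in>I. norm (a k - a i))"
proof -
  define W where "W = (\<Sum>j\<in>I - {k}. uvec (a j) (a k))"
  have "(\<Sum>i\<in>I - {k}. uvec (a k) (a i)) = - W"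
    unfolding W_def sum_negf[symmetric] by (intro sum.cong refl uvec_commute)
  moreover have "norm W > 1" using gt by (simp add: W_def)
  then have "norm W * 1 < norm W * norm W" by (intro mult_strict_left_mono) auto
  ultimately have "norm W < (\<Sum>i\<in>I - {k}. uvec (a k) (a i)) \<bullet> - W"
    by (simp add: power2_norm_eq_inner[symmetric] power2_eq_square)
  then obtain t where t: "t > 0" and
    less: "(\<Sum>i\<in>I - {k}. norm (a k + t *\<^sub>R - W - a i)) < (\<Sum>i\<in>I - {k}. norm (a k - a i)) - t * norm W"
    using sum_dist_decrease[of "I - {k}" "a k" a "norm W" "- W"] assms(1,3) by auto
  define X where "X = a k + t *\<^sub>R - W"
  have "(\<Sum>i\<in>I. norm (X - a i)) = t * norm W + (\<Sum>i\<in>I - {k}. norm (X - a i))"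
    using t assms(1,2) by (simp add: sum.remove X_def)
  also have "\<dots> < (\<Sum>i\<in>I. norm (a k - a i))"
    using less assms(1,2) by (simp add: sum.remove X_def)
  finally show ?thesis by blast
qed

lemma sum_dist_minimizer_not_vertex:
  fixes a :: "'i \<Rightarrow> real^3"
  assumes "finite I" "inj_on a I" "\<forall>k\<in>I. norm (\<Sum>j\<in>I - {k}. uvec (a j) (a k)) > 1"
    and min: "\<forall>X. (\<Sum>i\<in>I. norm (p - a i)) \<le> (\<Sum>i\<in>I. norm (X - a i))"
  shows "\<forall>i\<in>I. p \<noteq> a i"
proof (intro ballI notI)
  fix k assume k: "k \<in> I" "p = a k"
  have "\<forall>i\<in>I - {k}. a k \<noteq> a i" using assms(2) k(1) by (auto dest: inj_onD)
  then obtain X where "(\<Sum>i\<in>I. norm (X - a i)) < (\<Sum>i\<in>I. norm (a k - a i))"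
    using sum_dist_not_min_at_vertex[OF assms(1) k(1)] assms(3) k(1) by blast
  with min k(2) show False by (meson not_less)
qed

lemma coplanar_if_opposite_uvecs:
  assumes "uvec p a + uvec p b = 0" "uvec p c + uvec p d = 0"
  shows "coplanar {a, b, c, d}"
proof -
  define x where "x = uvec p a"
  define y where "y = uvec p c"
  have hb: "uvec p b = - x" using assms(1) by (simp add: x_def eq_neg_iff_add_eq_0 add.commute)
  have hd: "uvec p d = - y" using assms(2) by (simp add: y_def eq_neg_iff_add_eq_0 add.commute)
  have mem: "p + r *\<^sub>R x + s *\<^sub>R y \<in> affine hull {p, p + x, p + y}" for r s
    unfolding affine_hull_3
    by (rule CollectI, rule exI[of _ "1 - r - s"], rule exI[of _ r], rule exI[of _ s])
       (simp add: algebra_simps)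
  have "a \<in> affine hull {p, p + x, p + y}"
    using mem[of "norm (a - p)" 0] uvec_decomp[of a p] x_def by simp
  moreover have "b \<in> affine hull {p, p + x, p + y}"
    using mem[of "- norm (b - p)" 0] uvec_decomp[of b p] hb by simp
  moreover have "c \<in> affine hull {p, p + x, p + y}"
    using mem[of 0 "norm (c - p)"] uvec_decomp[of c p] y_def by simp
  moreover have "d \<in> affine hull {p, p + x, p + y}"
    using mem[of 0 "- norm (d - p)"] uvec_decomp[of d p] hd by simp
  ultimately show ?thesis unfolding coplanar_def by blast
qed

lemma uvec_pair_sum_neq_0_if_not_coplanar:
  assumes "uvec p a + uvec p b + uvec p c + uvec p d = 0" "\<not> coplanar {a, b, c, d}"
  shows "uvec p a + uvec p b \<noteq> 0"
proof
  assume ab: "uvec p a + uvec p b = 0"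
  have "(uvec p a + uvec p b) + (uvec p c + uvec p d) = 0" using assms(1) by (simp add: add.assoc)
  with ab have "uvec p c + uvec p d = 0" by simp
  with ab assms(2) show False using coplanar_if_opposite_uvecs by blast
qed

lemma inj_on_if_not_coplanar:
  assumes "finite I" "card I \<le> 4" "\<not> coplanar (A ` I)"
  shows "inj_on A I"
proof (rule inj_onI, rule ccontr)
  fix i j assume ij: "i \<in> I" "j \<in> I" "A i = A j" "i \<noteq> j"
  then have "A i \<in> A ` (I - {i})" by auto
  then have eq: "A ` I = A ` (I - {i})"
    using ij(1) by (metis image_insert insert_Diff insert_absorb)
  have "card (A ` (I - {i})) \<le> 3"
    using card_image_le[of "I - {i}" A] assms(1,2) ij(1) by simp
  then have "coplanar (A ` (I - {i}))" using assms(1) by (simp add: coplanar_small)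
  with assms(3) eq show False by simp
qed

text \<open>Four unit vectors summing to zero: \<open>\<parallel>u\<^sub>4\<parallel>\<^sup>2 = \<parallel>u\<^sub>1 + u\<^sub>2 + u\<^sub>3\<parallel>\<^sup>2\<close> forces
  \<open>u\<^sub>1\<bullet>u\<^sub>2 + u\<^sub>1\<bullet>u\<^sub>3 + u\<^sub>2\<bullet>u\<^sub>3 = -1\<close>.\<close>
lemma unit_sum_zero_bisectors_orthogonal:
  fixes u1 u2 u3 u4 :: "'a::real_inner"
  assumes "u1 + u2 + u3 + u4 = 0"
    and "norm u1 = 1" "norm u2 = 1" "norm u3 = 1" "norm u4 = 1"
  shows "(u1 + u2) \<bullet> (u1 + u3) = 0"
proof -
  have u4: "u4 = - (u1 + u2 + u3)" using assms(1) by (rule minus_unique[symmetric])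
  have "u1 \<bullet> u2 + u1 \<bullet> u3 + u2 \<bullet> u3 = -1"
    using assms(2-5) unfolding u4 norm_eq_1
    by (simp add: inner_add_left inner_add_right inner_diff_left inner_diff_right inner_commute)
  then show ?thesis
    using assms(2) unfolding norm_eq_1 by (simp add: inner_add_left inner_add_right inner_commute)
qed

lemma inner_normalize_neg:
  fixes x :: "'a::real_inner"
  assumes "x \<noteq> 0"
  shows "(x /\<^sub>R norm x) \<bullet> (- x /\<^sub>R norm (- x)) = -1"
  using assms by (simp add: power2_norm_eq_inner[symmetric] field_simps power2_eq_square)

theorem mainTheorem2:
  fixes A :: "nat \<Rightarrow> real^3" and A0 :: "real^3"
  assumes noncoplanar: "\<not> coplanar {A 1, A 2, A 3, A 4}"
    and cond: "\<forall>i\<in>{1..4}. norm (\<Sum>j\<in>{1..4} - {i}. uvec (A j) (A i)) > 1"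
    and FT: "is_FT_point A A0"
  defines "\<delta> \<equiv> (\<lambda>i j. uvec A0 (A i) + uvec A0 (A j))"
  shows "(\<delta> 1 2 /\<^sub>R norm (\<delta> 1 2)) \<bullet> (\<delta> 3 4 /\<^sub>R norm (\<delta> 3 4)) = -1
       \<and> (\<delta> 2 3 /\<^sub>R norm (\<delta> 2 3)) \<bullet> (\<delta> 1 4 /\<^sub>R norm (\<delta> 1 4)) = -1
       \<and> (\<delta> 1 3 /\<^sub>R norm (\<delta> 1 3)) \<bullet> (\<delta> 2 4 /\<^sub>R norm (\<delta> 2 4)) = -1
       \<and> \<delta> 1 2 \<bullet> \<delta> 1 3 = 0 \<and> \<delta> 1 2 \<bullet> \<delta> 1 4 = 0 \<and> \<delta> 1 3 \<bullet> \<delta> 1 4 = 0"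
proof -
  have I: "{1..4::nat} = {1, 2, 3, 4}" by auto
  have "A ` {1..4} = {A 1, A 2, A 3, A 4}" by (simp only: I image_insert image_empty)
  with noncoplanar have inj: "inj_on A {1..4}" by (intro inj_on_if_not_coplanar) simp_all
  have min: "\<forall>X. (\<Sum>i\<in>{1..4}. norm (A0 - A i)) \<le> (\<Sum>i\<in>{1..4}. norm (X - A i))"
    using FT by (simp add: is_FT_point_def)
  have not_vertex: "\<forall>i\<in>{1..4}. A0 \<noteq> A i"
    by (rule sum_dist_minimizer_not_vertex[OF _ inj cond min]) simp
  define u where "u i = uvec A0 (A i)" for i
  have unit: "norm (u 1) = 1" "norm (u 2) = 1" "norm (u 3) = 1" "norm (u 4) = 1"
    using not_vertex by (simp_all add: u_def norm_uvec I)
  have sum0: "u 1 + u 2 + u 3 + u 4 = 0"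
    using sum_dist_min_imp_sum_uvec_eq_0[OF _ not_vertex min] unfolding I
    by (simp add: u_def add.assoc)
  have "\<not> coplanar {A 2, A 3, A 1, A 4}" "\<not> coplanar {A 1, A 3, A 2, A 4}"
    using noncoplanar by (simp_all add: insert_commute)
  moreover have "u 2 + u 3 + u 1 + u 4 = 0" "u 1 + u 3 + u 2 + u 4 = 0"
    using sum0 by (simp_all add: ac_simps)
  ultimately have nz: "u 1 + u 2 \<noteq> 0" "u 2 + u 3 \<noteq> 0" "u 1 + u 3 \<noteq> 0"
    using uvec_pair_sum_neq_0_if_not_coplanar noncoplanar sum0 unfolding u_def by blast+
  have u4: "u 4 = - (u 1 + u 2 + u 3)" using sum0 by (rule minus_unique[symmetric])
  have opp: "u 3 + u 4 = - (u 1 + u 2)" "u 1 + u 4 = - (u 2 + u 3)" "u 2 + u 4 = - (u 1 + u 3)"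
    unfolding u4 by (simp_all add: algebra_simps)
  have orth: "(u 1 + u 2) \<bullet> (u 1 + u 3) = 0" "(u 1 + u 2) \<bullet> (u 1 + u 4) = 0"
    "(u 1 + u 3) \<bullet> (u 1 + u 4) = 0"
    using unit_sum_zero_bisectors_orthogonal[of "u 1" "u 2" "u 3" "u 4"]
      unit_sum_zero_bisectors_orthogonal[of "u 1" "u 2" "u 4" "u 3"]
      unit_sum_zero_bisectors_orthogonal[of "u 1" "u 3" "u 4" "u 2"] sum0 unit
    by (simp_all add: ac_simps)
  have \<delta>_u: "\<delta> i j = u i + u j" for i j by (simp add: \<delta>_def u_def)
  show ?thesis
    unfolding \<delta>_u opp
    using inner_normalize_neg[OF nz(1)] inner_normalize_neg[OF nz(2)]
      inner_normalize_neg[OF nz(3)] orth[unfolded opp]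
    by simp
qed

end
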